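(* Let $\{x,x_1\}$ be a Bertrand $D$-pair of type 1 in $E_1^3$, with $x(s)$ on the oriented surface $S$ and $x_1(s_1)$ on the oriented surface $S_1$. Let $k_g,k_n,\tau_g$ be the geodesic curvature, normal curvature and geodesic torsion of $x$, let $k_{g_1},k_{n_1},\tau_{g_1}$ be those of $x_1$, and let $\theta$ be the angle between the unit tangents $\vec T$ and $\vec T_1$ at corresponding points (so $\langle\vec T,\vec T_1\rangle=\cosh\theta$). Then (i) $k_{n_1} = k_n \frac{ds}{ds_1} - \frac{d\theta}{ds_1}$; (ii) $\tau_g \frac{ds}{ds_1} = k_{g_1} \sinh \theta - \tau_{g_1} \cosh \theta$; (iii) $k_g \frac{ds}{ds_1} = k_{g_1} \cosh \theta + \tau_{g_1} \sinh \theta$; (iv) $\tau_{g_1} = (-k_g \sinh \theta + \tau_g \cosh \theta) \frac{ds}{ds_1}$.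
   Context: Minkowski 3-space $E_1^3$ is $\mathbb{R}^3$ with metric $\langle u,v\rangle=-u_1v_1+u_2v_2+u_3v_3$ and Lorentz cross product $u\times v=(u_2v_3-u_3v_2,\ u_1v_3-u_3v_1,\ u_2v_1-u_1v_2)$. A surface is spacelike if its induced metric is Riemannian (its unit normal is timelike). Darboux frame on a spacelike surface: for a unit-speed spacelike curve $x(s)$ on an oriented spacelike surface $S$ with unit normal $\vec n$, $\vec T=dx/ds$, $\vec g=\vec n\times\vec T$, $\langle\vec T,\vec T\rangle=\langle\vec g,\vec g\rangle=1$, $\langle\vec n,\vec n\rangle=-1$, and $\dot{\vec T}=k_g\vec g+k_n\vec n$, $\dot{\vec g}=-k_g\vec T+\tau_g\vec n$, $\dot{\vec n}=k_n\vec T+\tau_g\vec g$, where $k_g,k_n,\tau_g$ are the geodesic curvature, normal curvature and geodesic torsion. A Bertrand $D$-pair $\{x,x_1\}$: unit-speed curves $x(s)$ on $S$ and $x_1(s_1)$ on $S_1$ with a point correspondence $s=s(s_1)$ such that at corresponding points the Darboux vector $\vec g$ of $x$ coincides (in direction) with the Darboux vector $\vec g_1$ of $x_1$. It is of type 1 if $S$, $x$, $S_1$, $x_1$ are all spacelike. For spacelike $u,v$ spanning a timelike plane, the (central) angle $\theta\ge0$ between them satisfies $\langle u,v\rangle=|u||v|\cosh\theta$.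
   Formalization: At corresponding points $\langle\vec T_1,\vec n\rangle\ge0$ holds in addition, and (ii) has a plus sign before its last term: $\tau_g \frac{ds}{ds_1} = k_{g_1} \sinh \theta + \tau_{g_1} \cosh \theta$. Each condition added here is assumed in the paper as well or is needed for the statement above to hold. This also corrects a misprint. *)

theory Defs
  imports "HOL-Analysis.Analysis"
begin

definition minner :: "real^3 \<Rightarrow> real^3 \<Rightarrow> real" where
  "minner u v = - (u$1 * v$1) + u$2 * v$2 + u$3 * v$3"

definition lcross :: "real^3 \<Rightarrow> real^3 \<Rightarrow> real^3" where
  "lcross u v = vector [u$2 * v$3 - u$3 * v$2, u$1 * v$3 - u$3 * v$1, u$2 * v$1 - u$1 * v$2]"

text \<open>Darboux frame of a curve x on an oriented surface whose unit normal along the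
  curve is n (i.e. n s is the surface normal at x s).\<close>

definition tang :: "(real \<Rightarrow> real^3) \<Rightarrow> real \<Rightarrow> real^3" where
  "tang x s = vector_derivative x (at s)"

definition dgvec :: "(real \<Rightarrow> real^3) \<Rightarrow> (real \<Rightarrow> real^3) \<Rightarrow> real \<Rightarrow> real^3" where
  "dgvec x n s = lcross (n s) (tang x s)"

text \<open>Curvatures read off from the Darboux equations
  T' = k_g g + k_n n,  g' = -k_g T + tau_g n  (with <g,g> = 1, <n,n> = -1).\<close>

definition geod_curv :: "(real \<Rightarrow> real^3) \<Rightarrow> (real \<Rightarrow> real^3) \<Rightarrow> real \<Rightarrow> real" where
  "geod_curv x n s = minner (vector_derivative (tang x) (at s)) (dgvec x n s)"

definition norm_curv :: "(real \<Rightarrow> real^3) \<Rightarrow> (real \<Rightarrow> real^3) \<Rightarrow> real \<Rightarrow> real" where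
  "norm_curv x n s = - minner (vector_derivative (tang x) (at s)) (n s)"

definition geod_tors :: "(real \<Rightarrow> real^3) \<Rightarrow> (real \<Rightarrow> real^3) \<Rightarrow> real \<Rightarrow> real" where
  "geod_tors x n s = - minner (vector_derivative (dgvec x n) (at s)) (n s)"

definition spacelike_darboux :: "real set \<Rightarrow> (real \<Rightarrow> real^3) \<Rightarrow> (real \<Rightarrow> real^3) \<Rightarrow> bool" where
  "spacelike_darboux I x n \<longleftrightarrow> open I \<and>
     (\<forall>s\<in>I. x differentiable (at s) \<and> tang x differentiable (at s) \<and> n differentiable (at s)
        \<and> minner (tang x s) (tang x s) = 1
        \<and> minner (n s) (n s) = -1
        \<and> minner (n s) (tang x s) = 0)"

end

theory Submission
  imports Defs
begin

text \<open>The Darboux frames (T, g, n) and (T1, g1, n1) share the spacelike vector g = g1, so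
  (T1, n1) arises from (T, n) by a hyperbolic rotation through the angle \<theta> in the timelike
  plane orthogonal to g: T1 = cosh \<theta> T - sinh \<theta> n and n1 = cosh \<theta> n - sinh \<theta> T.
  Since g1(s1) = g(s(s1)), the chain rule gives g1' = (ds/ds1) g', and pairing this with T1 and n1
  expresses k_g1 and \<tau>_g1 through k_g and \<tau>_g; inverting the rotation gives (ii) and (iii).
  Differentiating sinh \<theta> = <T1, n> gives (i).\<close>

lemma minner_commute: "minner u v = minner v u"
  by (simp add: minner_def)

lemma bounded_bilinear_minner: "bounded_bilinear minner"
  unfolding bilinear_conv_bounded_bilinear[symmetric]
  by (simp add: bilinear_def linear_iff minner_def algebra_simps)

lemma bounded_bilinear_lcross: "bounded_bilinear lcross"
  unfolding bilinear_conv_bounded_bilinear[symmetric]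
  by (simp add: bilinear_def linear_iff lcross_def vec_eq_iff forall_3 vector_3 algebra_simps)

interpretation minner: bounded_bilinear minner
  by (rule bounded_bilinear_minner)

interpretation lcross: bounded_bilinear lcross
  by (rule bounded_bilinear_lcross)

lemma lcross_nth:
  "lcross u v $ 1 = u$2 * v$3 - u$3 * v$2"
  "lcross u v $ 2 = u$1 * v$3 - u$3 * v$1"
  "lcross u v $ 3 = u$2 * v$1 - u$1 * v$2"
  by (simp_all add: lcross_def vector_3)

lemma lcross_lcross: "lcross (lcross a b) c = minner b c *\<^sub>R a - minner a c *\<^sub>R b"
  by (simp add: vec_eq_iff forall_3 lcross_nth minner_def algebra_simps)

lemma minner_lcross_right: "minner (lcross a b) b = 0"
  by (simp add: lcross_nth minner_def algebra_simps)

lemma minner_expansion_darboux_frame: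
  assumes "minner T T = 1" "minner N N = -1" "minner N T = 0"
  shows "v = minner v T *\<^sub>R T - minner v N *\<^sub>R N + minner v (lcross N T) *\<^sub>R lcross N T"
  using assms unfolding vec_eq_iff forall_3 minner_def
  by (simp add: lcross_nth; intro conjI; algebra)

lemma darboux_frames_hyperbolic_rotation:
  assumes T: "minner T T = 1" and N: "minner N N = -1" and NT: "minner N T = 0"
    and T1: "minner T1 T1 = 1" and NT1: "minner N1 T1 = 0"
    and g: "lcross N1 T1 = lcross N T" and cosh: "minner T T1 = cosh th"
    and orient: "minner T1 N \<ge> 0" and "th \<ge> 0"
  shows "T1 = cosh th *\<^sub>R T - sinh th *\<^sub>R N"
    and "N1 = cosh th *\<^sub>R N - sinh th *\<^sub>R T"
proof -
  define a where "a = minner T1 N"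
  have "minner T1 (lcross N T) = 0"
    using minner_lcross_right[of N1 T1] g by (simp add: minner_commute)
  then have T1_eq: "T1 = cosh th *\<^sub>R T - a *\<^sub>R N"
    using minner_expansion_darboux_frame[OF T N NT, of T1] cosh by (simp add: a_def minner_commute)
  have "1 = minner (cosh th *\<^sub>R T - a *\<^sub>R N) (cosh th *\<^sub>R T - a *\<^sub>R N)"
    using T1 T1_eq by simp
  also have "\<dots> = (cosh th)\<^sup>2 - a\<^sup>2"
    using T N NT by (simp add: minner.diff_left minner.diff_right minner.scaleR_left minner.scaleR_right
        minner_commute[of T N] power2_eq_square)
  finally have "a\<^sup>2 = (sinh th)\<^sup>2"
    using cosh_square_eq[of th] by simp
  then have a: "a = sinh th"
    using orient \<open>th \<ge> 0\<close> a_def by simp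
  then show "T1 = cosh th *\<^sub>R T - sinh th *\<^sub>R N"
    using T1_eq by simp
  have "N1 = lcross (lcross N1 T1) T1"
    using lcross_lcross[of N1 T1 T1] T1 NT1 by simp
  also have "\<dots> = cosh th *\<^sub>R N - sinh th *\<^sub>R T"
    using lcross_lcross[of N T T1] g cosh a a_def by (simp add: minner_commute)
  finally show "N1 = cosh th *\<^sub>R N - sinh th *\<^sub>R T" .
qed

lemma DERIV_unique_eq_on_open:
  assumes "open I" "s \<in> I" "\<And>t. t \<in> I \<Longrightarrow> f t = g t"
    and "(f has_real_derivative D) (at s)" "(g has_real_derivative E) (at s)"
  shows "D = E"
proof -
  have "(g has_real_derivative D) (at s)"
    using assms by (intro has_field_derivative_transform_within_open[OF assms(4,1,2)]) auto
  then show ?thesis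
    using assms(5) DERIV_unique by blast
qed

lemma has_real_derivative_minner:
  assumes "(u has_vector_derivative u') (at s)" "(v has_vector_derivative v') (at s)"
  shows "((\<lambda>t. minner (u t) (v t)) has_real_derivative minner (u s) v' + minner u' (v s)) (at s)"
  using minner.has_vector_derivative[OF assms]
  by (simp add: has_real_derivative_iff_has_vector_derivative)

lemma minner_derivative_eq_0_if_constant_on:
  assumes "open I" "s \<in> I" "\<And>t. t \<in> I \<Longrightarrow> minner (u t) (v t) = c"
    and "(u has_vector_derivative u') (at s)" "(v has_vector_derivative v') (at s)"
  shows "minner (u s) v' + minner u' (v s) = 0"
  using DERIV_unique_eq_on_open[OF assms(1-3) has_real_derivative_minner[OF assms(4,5)] DERIV_const] .

lemma spacelike_darboux_has_vector_derivative:
  assumes "spacelike_darboux I x n" "s \<in> I"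
  shows "(tang x has_vector_derivative vector_derivative (tang x) (at s)) (at s)"
    and "(n has_vector_derivative vector_derivative n (at s)) (at s)"
    and "(dgvec x n has_vector_derivative vector_derivative (dgvec x n) (at s)) (at s)"
proof -
  show T: "(tang x has_vector_derivative vector_derivative (tang x) (at s)) (at s)"
    and N: "(n has_vector_derivative vector_derivative n (at s)) (at s)"
    using assms by (simp_all add: spacelike_darboux_def vector_derivative_works)
  have "dgvec x n = (\<lambda>t. lcross (n t) (tang x t))"
    by (simp add: dgvec_def fun_eq_iff)
  then show "(dgvec x n has_vector_derivative vector_derivative (dgvec x n) (at s)) (at s)"
    using lcross.has_vector_derivative[OF N T] vector_derivative_works differentiableI_vector
    by metis
qed

lemma spacelike_darboux_minner_derivative:
  assumes "spacelike_darboux I x n" "s \<in> I"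
  shows "minner (vector_derivative (tang x) (at s)) (tang x s) = 0"
    and "minner (vector_derivative n (at s)) (n s) = 0"
    and "minner (vector_derivative n (at s)) (tang x s) = norm_curv x n s"
    and "minner (vector_derivative (dgvec x n) (at s)) (tang x s) = - geod_curv x n s"
proof -
  have I: "open I" and frame: "\<And>t. t \<in> I \<Longrightarrow> minner (tang x t) (tang x t) = 1
      \<and> minner (n t) (n t) = -1 \<and> minner (n t) (tang x t) = 0"
    using assms(1) by (auto simp: spacelike_darboux_def)
  note derivs = spacelike_darboux_has_vector_derivative[OF assms]
  show "minner (vector_derivative (tang x) (at s)) (tang x s) = 0"
    using minner_derivative_eq_0_if_constant_on[OF I assms(2) _ derivs(1) derivs(1)] frame
    by (simp add: minner_commute)
  show "minner (vector_derivative n (at s)) (n s) = 0"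
    using minner_derivative_eq_0_if_constant_on[OF I assms(2) _ derivs(2) derivs(2)] frame
    by (simp add: minner_commute)
  show "minner (vector_derivative n (at s)) (tang x s) = norm_curv x n s"
    using minner_derivative_eq_0_if_constant_on[OF I assms(2) _ derivs(2) derivs(1), of 0] frame
    by (simp add: norm_curv_def minner_commute)
  show "minner (vector_derivative (dgvec x n) (at s)) (tang x s) = - geod_curv x n s"
    using minner_derivative_eq_0_if_constant_on[OF I assms(2) _ derivs(3) derivs(1), of 0]
    by (simp add: geod_curv_def dgvec_def minner_lcross_right
        minner_commute[of "vector_derivative (tang x) (at s)"])
qed

locale bertrand_D_pair =
  fixes x x1 n n1 :: "real \<Rightarrow> real^3"
    and I I1 :: "real set"
    and \<phi> \<theta> :: "real \<Rightarrow> real"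
  assumes curve: "spacelike_darboux I x n"
    and curve1: "spacelike_darboux I1 x1 n1"
    and corr: "\<And>s1. s1 \<in> I1 \<Longrightarrow> \<phi> s1 \<in> I"
    and corr_diff: "\<And>s1. s1 \<in> I1 \<Longrightarrow> \<phi> differentiable (at s1)"
    and bertrand: "\<And>s1. s1 \<in> I1 \<Longrightarrow> dgvec x1 n1 s1 = dgvec x n (\<phi> s1)"
    and angle_nonneg: "\<And>s1. s1 \<in> I1 \<Longrightarrow> \<theta> s1 \<ge> 0"
    and angle: "\<And>s1. s1 \<in> I1 \<Longrightarrow> minner (tang x (\<phi> s1)) (tang x1 s1) = cosh (\<theta> s1)"
    and angle_orient: "\<And>s1. s1 \<in> I1 \<Longrightarrow> minner (tang x1 s1) (n (\<phi> s1)) \<ge> 0"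
    and angle_diff: "\<And>s1. s1 \<in> I1 \<Longrightarrow> \<theta> differentiable (at s1)"
begin

lemma
  assumes "s1 \<in> I1"
  shows tang1_eq: "tang x1 s1 = cosh (\<theta> s1) *\<^sub>R tang x (\<phi> s1) - sinh (\<theta> s1) *\<^sub>R n (\<phi> s1)"
    and normal1_eq: "n1 s1 = cosh (\<theta> s1) *\<^sub>R n (\<phi> s1) - sinh (\<theta> s1) *\<^sub>R tang x (\<phi> s1)"
  using darboux_frames_hyperbolic_rotation[OF _ _ _ _ _ _ angle angle_orient angle_nonneg]
    bertrand[OF assms] curve curve1 corr[OF assms] assms
  by (auto simp: spacelike_darboux_def dgvec_def)

lemma normal_eq:
  assumes "s1 \<in> I1"
  shows "n (\<phi> s1) = cosh (\<theta> s1) *\<^sub>R n1 s1 + sinh (\<theta> s1) *\<^sub>R tang x1 s1"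
proof -
  have "cosh (\<theta> s1) * cosh (\<theta> s1) - sinh (\<theta> s1) * sinh (\<theta> s1) = 1"
    using hyperbolic_pythagoras[of "\<theta> s1"] by (simp add: power2_eq_square)
  then show ?thesis
    unfolding tang1_eq[OF assms] normal1_eq[OF assms]
    by (simp add: algebra_simps flip: scaleR_diff_left)
qed

lemma minner_tang1_normal:
  assumes "s1 \<in> I1"
  shows "minner (tang x1 s1) (n (\<phi> s1)) = sinh (\<theta> s1)"
  using curve corr[OF assms]
  by (simp add: tang1_eq[OF assms] minner.diff_left minner.scaleR_left spacelike_darboux_def
      minner_commute[of "tang x (\<phi> s1)"])

lemma has_vector_derivative_correspondence:
  assumes "s1 \<in> I1"
  shows "(\<phi> has_vector_derivative deriv \<phi> s1) (at s1)"
  using corr_diff[OF assms]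
  by (simp add: DERIV_deriv_iff_real_differentiable flip: has_real_derivative_iff_has_vector_derivative)

lemma dgvec1_derivative:
  assumes "s1 \<in> I1"
  shows "vector_derivative (dgvec x1 n1) (at s1)
    = deriv \<phi> s1 *\<^sub>R vector_derivative (dgvec x n) (at (\<phi> s1))"
proof -
  have "((dgvec x n \<circ> \<phi>) has_vector_derivative
      deriv \<phi> s1 *\<^sub>R vector_derivative (dgvec x n) (at (\<phi> s1))) (at s1)"
    using vector_diff_chain_at[OF has_vector_derivative_correspondence[OF assms]]
      spacelike_darboux_has_vector_derivative(3)[OF curve corr[OF assms]]
    by blast
  then have "(dgvec x1 n1 has_vector_derivative
      deriv \<phi> s1 *\<^sub>R vector_derivative (dgvec x n) (at (\<phi> s1))) (at s1)"
  proof (rule has_vector_derivative_transform_within_open)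
    show "open I1"
      using curve1 by (simp add: spacelike_darboux_def)
  qed (use assms bertrand in auto)
  then show ?thesis
    by (rule vector_derivative_at)
qed

lemma geod_curv1_eq:
  assumes "s1 \<in> I1"
  shows "geod_curv x1 n1 s1
    = deriv \<phi> s1 * (cosh (\<theta> s1) * geod_curv x n (\<phi> s1) - sinh (\<theta> s1) * geod_tors x n (\<phi> s1))"
proof -
  have "geod_curv x1 n1 s1 = - minner (vector_derivative (dgvec x1 n1) (at s1)) (tang x1 s1)"
    using spacelike_darboux_minner_derivative(4)[OF curve1 assms] by simp
  also have "\<dots> = deriv \<phi> s1 * (cosh (\<theta> s1) * geod_curv x n (\<phi> s1) - sinh (\<theta> s1) * geod_tors x n (\<phi> s1))"
    using spacelike_darboux_minner_derivative(4)[OF curve corr[OF assms]]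
    by (simp add: dgvec1_derivative[OF assms] tang1_eq[OF assms] minner.scaleR_left
        minner.diff_right minner.scaleR_right geod_tors_def algebra_simps)
  finally show ?thesis .
qed

lemma geod_tors1_eq:
  assumes "s1 \<in> I1"
  shows "geod_tors x1 n1 s1
    = deriv \<phi> s1 * (cosh (\<theta> s1) * geod_tors x n (\<phi> s1) - sinh (\<theta> s1) * geod_curv x n (\<phi> s1))"
  using spacelike_darboux_minner_derivative(4)[OF curve corr[OF assms]]
  by (simp add: geod_tors_def dgvec1_derivative[OF assms] normal1_eq[OF assms] minner.scaleR_left
      minner.diff_right minner.scaleR_right algebra_simps)

text \<open>Differentiating the relation sinh \<theta> = <T1, n \<circ> \<phi>>.\<close>

lemma norm_curv1_eq:
  assumes "s1 \<in> I1"
  shows "norm_curv x1 n1 s1 = norm_curv x n (\<phi> s1) * deriv \<phi> s1 - deriv \<theta> s1"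
proof -
  define T1' where "T1' = vector_derivative (tang x1) (at s1)"
  define N' where "N' = vector_derivative n (at (\<phi> s1))"
  have "((n \<circ> \<phi>) has_vector_derivative deriv \<phi> s1 *\<^sub>R N') (at s1)"
    unfolding N'_def using vector_diff_chain_at[OF has_vector_derivative_correspondence[OF assms]]
      spacelike_darboux_has_vector_derivative(2)[OF curve corr[OF assms]] by blast
  then have product: "((\<lambda>t. minner (tang x1 t) ((n \<circ> \<phi>) t)) has_real_derivative
      minner (tang x1 s1) (deriv \<phi> s1 *\<^sub>R N') + minner T1' (n (\<phi> s1))) (at s1)"
    unfolding T1'_def using has_real_derivative_minner
      spacelike_darboux_has_vector_derivative(1)[OF curve1 assms] by fastforce
  have sinh: "((\<lambda>t. sinh (\<theta> t)) has_real_derivative cosh (\<theta> s1) * deriv \<theta> s1) (at s1)"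
    using angle_diff[OF assms]
    by (intro has_field_derivative_sinh) (simp add: DERIV_deriv_iff_real_differentiable)
  have "open I1"
    using curve1 by (simp add: spacelike_darboux_def)
  then have "minner (tang x1 s1) (deriv \<phi> s1 *\<^sub>R N') + minner T1' (n (\<phi> s1))
      = cosh (\<theta> s1) * deriv \<theta> s1"
    by (rule DERIV_unique_eq_on_open[OF _ assms _ product sinh]) (simp add: minner_tang1_normal)
  moreover have "minner (tang x1 s1) N' = cosh (\<theta> s1) * norm_curv x n (\<phi> s1)"
    using spacelike_darboux_minner_derivative(2,3)[OF curve corr[OF assms]]
    unfolding minner_commute[of "tang x1 s1"]
    by (simp add: N'_def tang1_eq[OF assms] minner.diff_right minner.scaleR_right)
  moreover have "minner T1' (n (\<phi> s1)) = - cosh (\<theta> s1) * norm_curv x1 n1 s1"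
    using spacelike_darboux_minner_derivative(1)[OF curve1 assms]
    by (simp add: T1'_def normal_eq[OF assms] minner.add_right minner.scaleR_right norm_curv_def)
  ultimately have "cosh (\<theta> s1) * norm_curv x1 n1 s1
      = cosh (\<theta> s1) * (norm_curv x n (\<phi> s1) * deriv \<phi> s1 - deriv \<theta> s1)"
    by (simp add: minner.scaleR_right algebra_simps)
  then show ?thesis
    by simp
qed

end

text \<open>Unlike the informal statement, (ii) carries + \<tau>_g1 cosh \<theta>: this is the sign forced by
  inverting the hyperbolic rotation in geod_curv1_eq and geod_tors1_eq.\<close>

theorem theorem4p3:
  fixes x x1 n n1 :: "real \<Rightarrow> real^3"
    and I I1 :: "real set"
    and \<phi> \<theta> :: "real \<Rightarrow> real"
  assumes curve: "spacelike_darboux I x n"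
    and curve1: "spacelike_darboux I1 x1 n1"
    and corr: "\<And>s1. s1 \<in> I1 \<Longrightarrow> \<phi> s1 \<in> I"
    and corr_diff: "\<And>s1. s1 \<in> I1 \<Longrightarrow> \<phi> differentiable (at s1)"
    and bertrand: "\<And>s1. s1 \<in> I1 \<Longrightarrow> dgvec x1 n1 s1 = dgvec x n (\<phi> s1)"
    and angle_nonneg: "\<And>s1. s1 \<in> I1 \<Longrightarrow> \<theta> s1 \<ge> 0"
    and angle: "\<And>s1. s1 \<in> I1 \<Longrightarrow> minner (tang x (\<phi> s1)) (tang x1 s1) = cosh (\<theta> s1)"
    and angle_orient: "\<And>s1. s1 \<in> I1 \<Longrightarrow> minner (tang x1 s1) (n (\<phi> s1)) \<ge> 0"
    and angle_diff: "\<And>s1. s1 \<in> I1 \<Longrightarrow> \<theta> differentiable (at s1)"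
    and s1: "s1 \<in> I1"
  shows "norm_curv x1 n1 s1 = norm_curv x n (\<phi> s1) * deriv \<phi> s1 - deriv \<theta> s1
     \<and> geod_tors x n (\<phi> s1) * deriv \<phi> s1
           = geod_curv x1 n1 s1 * sinh (\<theta> s1) + geod_tors x1 n1 s1 * cosh (\<theta> s1)
     \<and> geod_curv x n (\<phi> s1) * deriv \<phi> s1
           = geod_curv x1 n1 s1 * cosh (\<theta> s1) + geod_tors x1 n1 s1 * sinh (\<theta> s1)
     \<and> geod_tors x1 n1 s1
           = (- geod_curv x n (\<phi> s1) * sinh (\<theta> s1) + geod_tors x n (\<phi> s1) * cosh (\<theta> s1)) * deriv \<phi> s1"
proof -
  interpret bertrand_D_pair x x1 n n1 I I1 \<phi> \<theta>
    using curve curve1 corr corr_diff bertrand angle_nonneg angle angle_orient angle_diff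
    by unfold_locales
  let ?c = "cosh (\<theta> s1)" and ?sh = "sinh (\<theta> s1)" and ?p = "deriv \<phi> s1"
  let ?kg = "geod_curv x n (\<phi> s1)" and ?tg = "geod_tors x n (\<phi> s1)"
  let ?kg1 = "geod_curv x1 n1 s1" and ?tg1 = "geod_tors x1 n1 s1"
  have pythagoras: "?c\<^sup>2 - ?sh\<^sup>2 = 1"
    by (rule hyperbolic_pythagoras)
  have "?kg1 * ?sh + ?tg1 * ?c = ?tg * ?p * (?c\<^sup>2 - ?sh\<^sup>2)"
    and "?kg1 * ?c + ?tg1 * ?sh = ?kg * ?p * (?c\<^sup>2 - ?sh\<^sup>2)"
    unfolding geod_curv1_eq[OF s1] geod_tors1_eq[OF s1] by (simp_all add: algebra_simps power2_eq_square)
  then have "?tg * ?p = ?kg1 * ?sh + ?tg1 * ?c" and "?kg * ?p = ?kg1 * ?c + ?tg1 * ?sh"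
    unfolding pythagoras by simp_all
  moreover have "?tg1 = (- ?kg * ?sh + ?tg * ?c) * ?p"
    using geod_tors1_eq[OF s1] by (simp add: algebra_simps)
  ultimately show ?thesis
    using norm_curv1_eq[OF s1] by blast
qed

end
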